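(* Let $\ell \ge 1$ and let $\mathcal{O} = \{\mathbf{p}^t, \mathbf{x}^t\}_{t=1}^T$ be a data set with $\mathbf{p}^t \in \mathbb{R}^\ell_{++}$ and $\mathbf{x}^t \in \mathbb{R}^\ell_+ \setminus \{\mathbf{0}\}$ for all $t$, and let $\mathbf{e} = \{e^t\}_{t=1}^T$ with $e^t \in (0,1]$ for all $t$. Then $\mathcal{O}$ obeys $\mathbf{e}$-GARP whenever any of the following conditions holds: (i) there is a consumption space $X \subseteq \mathbb{R}^\ell_+$ (containing all $\mathbf{x}^t$) and a utility function $U : X \to \mathbb{R}$ that both $\mathbf{e}$-rationalizes and $\mathbf{e}$-cost-rationalizes $\mathcal{O}$ (on $X$); (ii) $\mathcal{O}$ is $\mathbf{e}$-rationalizable (on $X=\mathbb{R}^\ell_+$) by a locally nonsatiated utility function $U : \mathbb{R}^\ell_+ \to \mathbb{R}$; (iii) $\mathcal{O}$ is $\mathbf{e}$-cost-rationalizable (on $X=\mathbb{R}^\ell_+$) by a continuous utility function $U : \mathbb{R}^\ell_+ \to \mathbb{R}$.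
   Context: For a consumption space $X\subseteq\mathbb{R}^\ell_+$ and $U:X\to\mathbb{R}$: $U$ $\mathbf{e}$-rationalizes $\mathcal{O}$ if for every $t$, $U(\mathbf{x}^t)\ge U(\mathbf{x})$ for all $\mathbf{x}\in X$ with $\mathbf{p}^t\cdot\mathbf{x}\le e^t\,\mathbf{p}^t\cdot\mathbf{x}^t$; $U$ $\mathbf{e}$-cost-rationalizes $\mathcal{O}$ if for every $t$, $e^t\,\mathbf{p}^t\cdot\mathbf{x}^t\le\mathbf{p}^t\cdot\mathbf{x}$ for all $\mathbf{x}\in X$ with $U(\mathbf{x})\ge U(\mathbf{x}^t)$. $U$ is locally nonsatiated if for every $\mathbf{x}$ and $\varepsilon>0$ there is $\mathbf{y}$ with $\|\mathbf{y}-\mathbf{x}\|<\varepsilon$ and $U(\mathbf{y})>U(\mathbf{x})$. Revealed preference relations: $\mathbf{x}^t \succcurlyeq_0^* \mathbf{x}^s$ (directly revealed preferred) if $\mathbf{p}^t\cdot\mathbf{x}^s \le e^t\,\mathbf{p}^t\cdot\mathbf{x}^t$; $\mathbf{x}^t \succ_0^* \mathbf{x}^s$ (strictly directly revealed preferred) if $\mathbf{p}^t\cdot\mathbf{x}^s < e^t\,\mathbf{p}^t\cdot\mathbf{x}^t$; $\mathbf{x}^t \succcurlyeq^* \mathbf{x}^s$ (revealed preferred) if there is a finite chain $\mathbf{x}^t \succcurlyeq_0^* \mathbf{x}^i \succcurlyeq_0^* \cdots \succcurlyeq_0^* \mathbf{x}^s$ among the observed bundles. $\mathcal{O}$ obeys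 $\mathbf{e}$-GARP if for all $t,s$, $\mathbf{x}^t \succcurlyeq^* \mathbf{x}^s$ implies that $\mathbf{x}^s \succ_0^* \mathbf{x}^t$ does not hold. *)

theory Defs
  imports "HOL-Analysis.Analysis"
begin

text \<open>Goods are indexed by a finite type 'n (so \<ell> = CARD('n) \<ge> 1).
  Observations are indexed by t \<in> {1..T}; prices p t, bundles x t, efficiency levels e t.\<close>

definition nonneg_orthant :: "(real ^ 'n) set" where
  "nonneg_orthant = {x. \<forall>i. 0 \<le> x $ i}"

definition e_rationalizes ::
  "(real ^ 'n) set \<Rightarrow> (real ^ 'n \<Rightarrow> real) \<Rightarrow> nat \<Rightarrow> (nat \<Rightarrow> real ^ 'n) \<Rightarrow> (nat \<Rightarrow> real ^ 'n) \<Rightarrow> (nat \<Rightarrow> real) \<Rightarrow> bool" where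
  "e_rationalizes X U T p x e \<longleftrightarrow>
     (\<forall>t\<in>{1..T}. \<forall>y\<in>X. p t \<bullet> y \<le> e t * (p t \<bullet> x t) \<longrightarrow> U (x t) \<ge> U y)"

definition e_cost_rationalizes ::
  "(real ^ 'n) set \<Rightarrow> (real ^ 'n \<Rightarrow> real) \<Rightarrow> nat \<Rightarrow> (nat \<Rightarrow> real ^ 'n) \<Rightarrow> (nat \<Rightarrow> real ^ 'n) \<Rightarrow> (nat \<Rightarrow> real) \<Rightarrow> bool" where
  "e_cost_rationalizes X U T p x e \<longleftrightarrow>
     (\<forall>t\<in>{1..T}. \<forall>y\<in>X. U y \<ge> U (x t) \<longrightarrow> e t * (p t \<bullet> x t) \<le> p t \<bullet> y)"

definition locally_nonsatiated :: "(real ^ 'n) set \<Rightarrow> (real ^ 'n \<Rightarrow> real) \<Rightarrow> bool" where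
  "locally_nonsatiated X U \<longleftrightarrow>
     (\<forall>x\<in>X. \<forall>\<epsilon>>0. \<exists>y\<in>X. norm (y - x) < \<epsilon> \<and> U y > U x)"

definition dir_rev_pref :: "(nat \<Rightarrow> real ^ 'n) \<Rightarrow> (nat \<Rightarrow> real ^ 'n) \<Rightarrow> (nat \<Rightarrow> real) \<Rightarrow> nat \<Rightarrow> nat \<Rightarrow> bool" where
  "dir_rev_pref p x e t s \<longleftrightarrow> p t \<bullet> x s \<le> e t * (p t \<bullet> x t)"

definition strict_dir_rev_pref :: "(nat \<Rightarrow> real ^ 'n) \<Rightarrow> (nat \<Rightarrow> real ^ 'n) \<Rightarrow> (nat \<Rightarrow> real) \<Rightarrow> nat \<Rightarrow> nat \<Rightarrow> bool" where
  "strict_dir_rev_pref p x e t s \<longleftrightarrow> p t \<bullet> x s < e t * (p t \<bullet> x t)"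

definition rev_pref :: "nat \<Rightarrow> (nat \<Rightarrow> real ^ 'n) \<Rightarrow> (nat \<Rightarrow> real ^ 'n) \<Rightarrow> (nat \<Rightarrow> real) \<Rightarrow> nat \<Rightarrow> nat \<Rightarrow> bool" where
  "rev_pref T p x e = (\<lambda>a b. a \<in> {1..T} \<and> b \<in> {1..T} \<and> dir_rev_pref p x e a b)\<^sup>+\<^sup>+"

definition e_GARP :: "nat \<Rightarrow> (nat \<Rightarrow> real ^ 'n) \<Rightarrow> (nat \<Rightarrow> real ^ 'n) \<Rightarrow> (nat \<Rightarrow> real) \<Rightarrow> bool" where
  "e_GARP T p x e \<longleftrightarrow>
     (\<forall>t\<in>{1..T}. \<forall>s\<in>{1..T}. rev_pref T p x e t s \<longrightarrow> \<not> strict_dir_rev_pref p x e s t)"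

end

theory Submission
  imports Defs
begin

text \<open>Each hypothesis yields a utility with U (x t) \<ge> U (x s) whenever x t is directly revealed
  preferred to x s, and U (x t) > U (x s) whenever it is strictly so. The weak inequalities chain
  along revealed preference, so a violation of e-GARP would give U (x t) > U (x t). Under (i) the
  weak inequality comes from rationalization and the strict one from cost-rationalization. Under
  (ii) local nonsatiation gives the strict one: near x s there is a strictly better bundle that is
  still affordable at observation t. Under (iii) continuity gives the weak one: if x s were
  strictly better than x t, a slightly scaled-down copy of x s would still be better but would
  cost strictly less than e t * (p t \<bullet> x t), contradicting cost-rationalization.\<close>

lemma inner_pos_nonneg_orthant:
  fixes p y :: "real ^ 'n"
  assumes "\<forall>i. 0 < p $ i" and "y \<in> nonneg_orthant" and "y \<noteq> 0"
  shows "0 < p \<bullet> y"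
proof -
  obtain i where "y $ i \<noteq> 0"
    using \<open>y \<noteq> 0\<close> by (metis vec_eq_iff zero_index)
  with assms have "0 < p $ i * y $ i" and "\<forall>j. 0 \<le> p $ j * y $ j"
    by (auto simp: nonneg_orthant_def less_le)
  then have "0 < (\<Sum>j\<in>UNIV. p $ j * y $ j)"
    by (intro sum_pos2[where i = i]) auto
  then show ?thesis
    by (simp add: inner_vec_def)
qed

lemma scaleR_nonneg_orthant:
  "0 \<le> r \<Longrightarrow> y \<in> nonneg_orthant \<Longrightarrow> r *\<^sub>R y \<in> nonneg_orthant"
  by (simp add: nonneg_orthant_def)

lemma rev_pref_utility_mono:
  fixes u :: "nat \<Rightarrow> 'b::order"
  assumes dir: "\<And>a b. a \<in> {1..T} \<Longrightarrow> b \<in> {1..T} \<Longrightarrow> dir_rev_pref p x e a b \<Longrightarrow> u b \<le> u a"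
    and "rev_pref T p x e t s"
  shows "u s \<le> u t"
  using \<open>rev_pref T p x e t s\<close> unfolding rev_pref_def
proof (induction rule: tranclp_induct)
  case (base s)
  then show ?case
    using dir by blast
next
  case (step s s')
  then show ?case
    using dir order_trans by blast
qed

lemma e_GARP_if_utility_respects_rev_pref:
  fixes u :: "nat \<Rightarrow> 'b::order"
  assumes dir: "\<And>a b. a \<in> {1..T} \<Longrightarrow> b \<in> {1..T} \<Longrightarrow> dir_rev_pref p x e a b \<Longrightarrow> u b \<le> u a"
    and strict: "\<And>a b. a \<in> {1..T} \<Longrightarrow> b \<in> {1..T} \<Longrightarrow> strict_dir_rev_pref p x e a b \<Longrightarrow> u b < u a"
  shows "e_GARP T p x e"
  unfolding e_GARP_def
proof (intro ballI impI notI)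
  fix t s
  assume "t \<in> {1..T}" "s \<in> {1..T}" "rev_pref T p x e t s" "strict_dir_rev_pref p x e s t"
  then have "u t < u s"
    using strict by blast
  moreover have "u s \<le> u t"
    using dir \<open>rev_pref T p x e t s\<close> by (rule rev_pref_utility_mono[where u = u])
  ultimately show False
    by simp
qed

lemma e_rationalizes_dir_rev_pref:
  assumes "e_rationalizes X U T p x e" and "\<forall>t\<in>{1..T}. x t \<in> X"
    and "a \<in> {1..T}" and "b \<in> {1..T}" and "dir_rev_pref p x e a b"
  shows "U (x b) \<le> U (x a)"
  using assms by (simp add: e_rationalizes_def dir_rev_pref_def)

lemma e_cost_rationalizes_strict_dir_rev_pref:
  assumes "e_cost_rationalizes X U T p x e" and "\<forall>t\<in>{1..T}. x t \<in> X"
    and "a \<in> {1..T}" and "b \<in> {1..T}" and "strict_dir_rev_pref p x e a b"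
  shows "U (x b) < U (x a)"
proof (rule ccontr)
  assume "\<not> U (x b) < U (x a)"
  then have "e a * (p a \<bullet> x a) \<le> p a \<bullet> x b"
    using assms(1-4) by (auto simp: e_cost_rationalizes_def)
  then show False
    using assms(5) by (simp add: strict_dir_rev_pref_def)
qed

lemma locally_nonsatiated_improves_in_open:
  assumes "locally_nonsatiated X U" and "open S" and "z \<in> X" and "z \<in> S"
  shows "\<exists>y\<in>X \<inter> S. U z < U y"
proof -
  obtain \<epsilon> where "\<epsilon> > 0" and "ball z \<epsilon> \<subseteq> S"
    using \<open>open S\<close> \<open>z \<in> S\<close> openE by blast
  moreover obtain y where "y \<in> X" "norm (y - z) < \<epsilon>" "U z < U y"
    using assms(1) \<open>z \<in> X\<close> \<open>\<epsilon> > 0\<close> unfolding locally_nonsatiated_def by blast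
  moreover have "y \<in> ball z \<epsilon>"
    using \<open>norm (y - z) < \<epsilon>\<close> by (simp add: dist_norm norm_minus_commute)
  ultimately show ?thesis
    by blast
qed

lemma locally_nonsatiated_e_rationalizes_strict_dir_rev_pref:
  assumes "locally_nonsatiated X U" and "e_rationalizes X U T p x e" and "\<forall>t\<in>{1..T}. x t \<in> X"
    and "a \<in> {1..T}" and "b \<in> {1..T}" and "strict_dir_rev_pref p x e a b"
  shows "U (x b) < U (x a)"
proof -
  obtain y where "y \<in> X" "p a \<bullet> y < e a * (p a \<bullet> x a)" "U (x b) < U y"
    using locally_nonsatiated_improves_in_open[OF assms(1) open_halfspace_lt] assms(3-6)
    by (fastforce simp: strict_dir_rev_pref_def)
  moreover have "U y \<le> U (x a)"
    using assms(2,4) \<open>y \<in> X\<close> \<open>p a \<bullet> y < e a * (p a \<bullet> x a)\<close>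
    by (simp add: e_rationalizes_def)
  ultimately show ?thesis
    by simp
qed

lemma continuous_on_exceeds_after_shrinking:
  fixes U :: "'a::real_normed_vector \<Rightarrow> real"
  assumes U: "continuous_on X U" and "z \<in> X" and "c < U z"
    and shrink: "\<And>r. r \<in> {0..1} \<Longrightarrow> r *\<^sub>R z \<in> X"
  shows "\<exists>r\<in>{0..<1}. c < U (r *\<^sub>R z)"
proof -
  have "continuous_on {0..1} (\<lambda>r. U (r *\<^sub>R z))"
    by (rule continuous_on_compose2[OF U]) (auto intro!: continuous_intros shrink)
  then have "((\<lambda>r. U (r *\<^sub>R z)) \<longlongrightarrow> U (1 *\<^sub>R z)) (at 1 within {0..1})"
    unfolding continuous_on_def by (simp del: scaleR_one)
  then have "((\<lambda>r. U (r *\<^sub>R z)) \<longlongrightarrow> U z) (at_left 1)"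
    by (simp add: at_within_Icc_at_left)
  then have "\<forall>\<^sub>F r in at_left 1. c < U (r *\<^sub>R z) \<and> r \<in> {0<..<1}"
    using \<open>c < U z\<close> by (intro eventually_conj order_tendstoD eventually_at_left_real) auto
  then obtain r where "c < U (r *\<^sub>R z)" and "r \<in> {0<..<1}"
    using eventually_happens'[OF trivial_limit_at_left_real] by blast
  then show ?thesis
    by auto
qed

lemma continuous_e_cost_rationalizes_dir_rev_pref:
  assumes cont: "continuous_on X U" and cost: "e_cost_rationalizes X U T p x e"
    and shrink: "\<And>r y. r \<in> {0..1} \<Longrightarrow> y \<in> X \<Longrightarrow> r *\<^sub>R y \<in> X"
    and a: "a \<in> {1..T}" and xb: "x b \<in> X" and budget: "0 < e a * (p a \<bullet> x a)"
    and pref: "dir_rev_pref p x e a b"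
  shows "U (x b) \<le> U (x a)"
proof (rule ccontr)
  assume "\<not> U (x b) \<le> U (x a)"
  then obtain r where r: "r \<in> {0..<1}" and better: "U (x a) < U (r *\<^sub>R x b)"
    using continuous_on_exceeds_after_shrinking[OF cont xb] shrink xb by (meson not_le)
  have "r *\<^sub>R x b \<in> X"
    using r xb by (auto intro: shrink)
  then have "e a * (p a \<bullet> x a) \<le> p a \<bullet> (r *\<^sub>R x b)"
    using cost a better unfolding e_cost_rationalizes_def by (blast intro: less_imp_le)
  also have "\<dots> = r * (p a \<bullet> x b)"
    by simp
  also have "\<dots> \<le> r * (e a * (p a \<bullet> x a))"
    using r pref by (intro mult_left_mono) (auto simp: dir_rev_pref_def)
  also have "\<dots> < e a * (p a \<bullet> x a)"
    using r budget by (simp add: mult_less_cancel_right2)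
  finally show False
    by simp
qed

lemma e_GARP_if_e_rationalizes_and_e_cost_rationalizes:
  assumes "\<forall>t\<in>{1..T}. x t \<in> X"
    and "e_rationalizes X U T p x e" and "e_cost_rationalizes X U T p x e"
  shows "e_GARP T p x e"
proof (rule e_GARP_if_utility_respects_rev_pref[where u = "\<lambda>t. U (x t)"])
  fix a b
  assume "a \<in> {1..T}" "b \<in> {1..T}" "dir_rev_pref p x e a b"
  with assms(2,1) show "U (x b) \<le> U (x a)"
    by (rule e_rationalizes_dir_rev_pref)
next
  fix a b
  assume "a \<in> {1..T}" "b \<in> {1..T}" "strict_dir_rev_pref p x e a b"
  with assms(3,1) show "U (x b) < U (x a)"
    by (rule e_cost_rationalizes_strict_dir_rev_pref)
qed

lemma e_GARP_if_locally_nonsatiated_e_rationalizes: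
  assumes "\<forall>t\<in>{1..T}. x t \<in> X"
    and "locally_nonsatiated X U" and "e_rationalizes X U T p x e"
  shows "e_GARP T p x e"
proof (rule e_GARP_if_utility_respects_rev_pref[where u = "\<lambda>t. U (x t)"])
  fix a b
  assume "a \<in> {1..T}" "b \<in> {1..T}" "dir_rev_pref p x e a b"
  with assms(3,1) show "U (x b) \<le> U (x a)"
    by (rule e_rationalizes_dir_rev_pref)
next
  fix a b
  assume "a \<in> {1..T}" "b \<in> {1..T}" "strict_dir_rev_pref p x e a b"
  with assms(2,3,1) show "U (x b) < U (x a)"
    by (rule locally_nonsatiated_e_rationalizes_strict_dir_rev_pref)
qed

lemma e_GARP_if_continuous_e_cost_rationalizes:
  assumes p_pos: "\<forall>t\<in>{1..T}. \<forall>i. 0 < p t $ i"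
    and x_nonneg: "\<forall>t\<in>{1..T}. x t \<in> nonneg_orthant \<and> x t \<noteq> 0"
    and e_pos: "\<forall>t\<in>{1..T}. 0 < e t"
    and cont: "continuous_on nonneg_orthant U"
    and cost: "e_cost_rationalizes nonneg_orthant U T p x e"
  shows "e_GARP T p x e"
proof (rule e_GARP_if_utility_respects_rev_pref[where u = "\<lambda>t. U (x t)"])
  fix a b
  assume "a \<in> {1..T}" "b \<in> {1..T}" "dir_rev_pref p x e a b"
  moreover have "0 < e a * (p a \<bullet> x a)"
    using inner_pos_nonneg_orthant[of "p a" "x a"] \<open>a \<in> {1..T}\<close> p_pos x_nonneg e_pos by simp
  ultimately show "U (x b) \<le> U (x a)"
    using x_nonneg
    by (intro continuous_e_cost_rationalizes_dir_rev_pref[OF cont cost] scaleR_nonneg_orthant) auto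
next
  fix a b
  assume "a \<in> {1..T}" "b \<in> {1..T}" "strict_dir_rev_pref p x e a b"
  moreover have "\<forall>t\<in>{1..T}. x t \<in> nonneg_orthant"
    using x_nonneg by blast
  ultimately show "U (x b) < U (x a)"
    using cost by (intro e_cost_rationalizes_strict_dir_rev_pref) auto
qed

theorem proposition2:
  fixes T :: nat and p x :: "nat \<Rightarrow> real ^ 'n" and e :: "nat \<Rightarrow> real"
  assumes p_pos: "\<forall>t\<in>{1..T}. \<forall>i. 0 < p t $ i"
    and x_nonneg: "\<forall>t\<in>{1..T}. x t \<in> nonneg_orthant \<and> x t \<noteq> 0"
    and e_range: "\<forall>t\<in>{1..T}. 0 < e t \<and> e t \<le> 1"
    and cond: "(\<exists>X U. X \<subseteq> nonneg_orthant \<and> (\<forall>t\<in>{1..T}. x t \<in> X) \<and>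
                  e_rationalizes X U T p x e \<and> e_cost_rationalizes X U T p x e)
             \<or> (\<exists>U. locally_nonsatiated nonneg_orthant U \<and> e_rationalizes nonneg_orthant U T p x e)
             \<or> (\<exists>U. continuous_on nonneg_orthant U \<and> e_cost_rationalizes nonneg_orthant U T p x e)"
  shows "e_GARP T p x e"
proof -
  have x_in: "\<forall>t\<in>{1..T}. x t \<in> nonneg_orthant"
    using x_nonneg by blast
  have e_pos: "\<forall>t\<in>{1..T}. 0 < e t"
    using e_range by blast
  from cond consider
      (rationalizes_and_cost_rationalizes) X U where "\<forall>t\<in>{1..T}. x t \<in> X"
        "e_rationalizes X U T p x e" "e_cost_rationalizes X U T p x e"
    | (locally_nonsatiated) U where "locally_nonsatiated nonneg_orthant U"
        "e_rationalizes nonneg_orthant U T p x e"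
    | (continuous) U where "continuous_on nonneg_orthant U"
        "e_cost_rationalizes nonneg_orthant U T p x e"
    by blast
  then show ?thesis
  proof cases
    case rationalizes_and_cost_rationalizes
    then show ?thesis
      by (rule e_GARP_if_e_rationalizes_and_e_cost_rationalizes)
  next
    case locally_nonsatiated
    with x_in show ?thesis
      by (rule e_GARP_if_locally_nonsatiated_e_rationalizes)
  next
    case continuous
    with p_pos x_nonneg e_pos show ?thesis
      by (rule e_GARP_if_continuous_e_cost_rationalizes)
  qed
qed

end
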